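(* Let $f$ be a loopless $(k,n)$-bounded affine permutation and let $f^\downarrow(p)=f(p-1)$ ($p\in\mathbb Z$), a $(k-1,n)$-bounded affine permutation. Then: (i) the reduced strand diagram of $f$ is connected (i.e. $G^\times_f$ is connected) if and only if both $G^H_f$ and $G^H_{f^\downarrow}$ are connected; (ii) the partition of $[n]$ into connected components of $G^\times_f$ is the common refinement of the partitions into connected components of $G^H_f$ and of $G^H_{f^\downarrow}$; i.e. $p,q\in[n]$ lie in the same component of $G^\times_f$ iff they lie in the same component of $G^H_f$ and in the same component of $G^H_{f^\downarrow}$.
   Context: A $(k,n)$-bounded affine permutation is a bijection $f:\mathbb Z\to\mathbb Z$ with $f(j+n)=f(j)+n$, $j\le f(j)\le j+n$, $\sum_{j=1}^n(f(j)-j)=kn$; loopless if $f(p)>p$ for all $p$; $\bar f\in S_n$ is given by $\bar f(p)\equiv f(p)\pmod n$. Place $b_1,\dots,b_n$ clockwise on a circle, with $p^-$ just before and $p^+$ just after $b_p$. For loopless $f$, the reduced strand diagram consists of straight arrows $S_p:s^+\to p^-$, $p\in[n]$, $s=\bar f^{-1}(p)$; distinct $p,q$ form an $f$-crossing if $S_p,S_q$ intersect; $G^\times_f$ is the graph on $[n]$ with edges the $f$-crossing pairs. For any bounded affine permutation $g$, $G^H_g$ is the graph on $[n]$ with an edge $\{p,q\}$ ($p\ne q$) whenever the closed straight segments $[b_s,b_p]$ and $[b_t,b_q]$ intersect, where $\bar g(s)=p$, $\bar g(t)=q$ (a segment may degenerate to a point). *)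

theory Defs
  imports "HOL-Analysis.Analysis"
begin

abbreviation idx :: "nat \<Rightarrow> int set" where
  "idx n \<equiv> {1..int n}"

definition bounded_affine_perm :: "int \<Rightarrow> nat \<Rightarrow> (int \<Rightarrow> int) \<Rightarrow> bool" where
  "bounded_affine_perm k n f \<longleftrightarrow>
     bij f \<and> (\<forall>j. f (j + int n) = f j + int n) \<and> (\<forall>j. j \<le> f j \<and> f j \<le> j + int n) \<and>
     (\<Sum>j\<in>idx n. f j - j) = k * int n"

definition loopless :: "(int \<Rightarrow> int) \<Rightarrow> bool" where
  "loopless f \<longleftrightarrow> (\<forall>p. f p > p)"

definition fbar :: "nat \<Rightarrow> (int \<Rightarrow> int) \<Rightarrow> int \<Rightarrow> int" where
  "fbar n f p = (f p - 1) mod int n + 1"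

definition fdown :: "(int \<Rightarrow> int) \<Rightarrow> int \<Rightarrow> int" where
  "fdown f p = f (p - 1)"

text \<open>Points on the unit circle, placed clockwise: position $x$ has angle $-2\pi x/n$.
  $b_p$ is at position $p$, $p^-$ at $p - 1/4$ (just before), $p^+$ at $p + 1/4$ (just after).\<close>
definition circ_pt :: "nat \<Rightarrow> real \<Rightarrow> complex" where
  "circ_pt n x = cis (- 2 * pi * x / real n)"

definition bpt :: "nat \<Rightarrow> int \<Rightarrow> complex" where
  "bpt n p = circ_pt n (real_of_int p)"

definition bminus :: "nat \<Rightarrow> int \<Rightarrow> complex" where
  "bminus n p = circ_pt n (real_of_int p - 1/4)"

definition bplus :: "nat \<Rightarrow> int \<Rightarrow> complex" where
  "bplus n p = circ_pt n (real_of_int p + 1/4)"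

definition crossing_graph :: "nat \<Rightarrow> (int \<Rightarrow> int) \<Rightarrow> (int \<times> int) set" where
  "crossing_graph n f = {(p, q). p \<in> idx n \<and> q \<in> idx n \<and> p \<noteq> q \<and>
     (\<exists>s\<in>idx n. \<exists>t\<in>idx n. fbar n f s = p \<and> fbar n f t = q \<and>
        closed_segment (bplus n s) (bminus n p) \<inter> closed_segment (bplus n t) (bminus n q) \<noteq> {})}"

definition hook_graph :: "nat \<Rightarrow> (int \<Rightarrow> int) \<Rightarrow> (int \<times> int) set" where
  "hook_graph n g = {(p, q). p \<in> idx n \<and> q \<in> idx n \<and> p \<noteq> q \<and>
     (\<exists>s\<in>idx n. \<exists>t\<in>idx n. fbar n g s = p \<and> fbar n g t = q \<and>
        closed_segment (bpt n s) (bpt n p) \<inter> closed_segment (bpt n t) (bpt n q) \<noteq> {})}"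

definition graph_connected :: "nat \<Rightarrow> (int \<times> int) set \<Rightarrow> bool" where
  "graph_connected n E \<longleftrightarrow> (\<forall>p\<in>idx n. \<forall>q\<in>idx n. (p, q) \<in> E\<^sup>*)"

end

theory Submission
  imports Defs
begin

text \<open>Use doubled coordinates on the circle: strand \<open>S\<^sub>p\<close> joins the positions \<open>2 \<sigma>(p)\<close> and
  \<open>2p - 1\<close>, where \<open>\<sigma>\<close> inverts \<open>fbar n f\<close>, and two strands cross iff their pairs of ends
  interleave. Merging the pairs \<open>2i - 1, 2i\<close> into \<open>b\<^sub>i\<close> yields the segments of \<open>G\<^sup>H\<^sub>f\<close>, merging
  the cyclic pairs \<open>2i, 2i + 1\<close> yields those of \<open>G\<^sup>H\<^sub>f\<^sub>\<down>\<close>. A monotone merging keeps interleaving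
  of distinct points, so crossings are edges of both hook graphs, and any other hook edge joins
  two strands having ends in a merged pair. Conversely, a parity invariant attached to the
  crossing component of \<open>p\<close> is preserved by hook edges outside the component, but a strand
  entered from the component by an edge of \<open>G\<^sup>H\<^sub>f\<close> and one entered by an edge of \<open>G\<^sup>H\<^sub>f\<^sub>\<down>\<close> get
  opposite values; so no strand outside it is reachable from \<open>p\<close> in both hook graphs.\<close>

section \<open>Orientation and crossing segments\<close>

definition orient :: "complex \<Rightarrow> complex \<Rightarrow> complex \<Rightarrow> real" where
  "orient A B C = Im (cnj (B - A) * (C - A))"

lemma orient_eq: "orient A B C = (Re B - Re A) * (Im C - Im A) - (Im B - Im A) * (Re C - Re A)"
  by (simp add: orient_def algebra_simps)

lemma orient_swap: "orient B A C = - orient A B C"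
  by (simp add: orient_eq algebra_simps)

lemma orient_closed_segment_convex:
  assumes "z \<in> closed_segment C D"
  obtains u where "0 \<le> u" "u \<le> 1" "orient A B z = (1 - u) * orient A B C + u * orient A B D"
proof -
  obtain u where u: "0 \<le> u" "u \<le> 1" "z = (1 - u) *\<^sub>R C + u *\<^sub>R D"
    using assms by (auto simp: closed_segment_def)
  have "orient A B z = (1 - u) * orient A B C + u * orient A B D"
    unfolding u(3) orient_eq by (simp add: algebra_simps)
  with u that show ?thesis by blast
qed

lemma orient_closed_segment_eq_0: "z \<in> closed_segment A B \<Longrightarrow> orient A B z = 0"
  by (erule orient_closed_segment_convex[where A = A and B = B]) (simp add: orient_eq algebra_simps)

lemma orient_closed_segment_pos:
  assumes "z \<in> closed_segment C D" "orient A B C > 0" "orient A B D > 0"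
  shows "orient A B z > 0"
proof -
  obtain u where u: "0 \<le> u" "u \<le> 1" "orient A B z = (1 - u) * orient A B C + u * orient A B D"
    using orient_closed_segment_convex[OF assms(1)] by blast
  have "(1 - u) * orient A B C + u * orient A B D > 0"
    using u(1,2) assms(2,3) by (cases "u = 1") (auto intro: add_pos_nonneg add_nonneg_pos)
  with u(3) show ?thesis by simp
qed

lemma orient_closed_segment_neg:
  assumes "z \<in> closed_segment C D" "orient A B C < 0" "orient A B D < 0"
  shows "orient A B z < 0"
  using orient_closed_segment_pos[OF assms(1), of B A] assms(2,3) by (simp add: orient_swap[of A B])

lemma orient_cramer_identity:
  fixes A B C D :: complex
  defines "a \<equiv> orient C D A" and "b \<equiv> orient C D B" and "c \<equiv> orient A B C" and "d \<equiv> orient A B D"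
  shows "((a - b) * (c - d)) *\<^sub>R A + (a * (c - d)) *\<^sub>R (B - A) =
         ((a - b) * (c - d)) *\<^sub>R C + (c * (a - b)) *\<^sub>R (D - C)"
  unfolding complex_eq_iff a_def b_def c_def d_def orient_eq by simp algebra

lemma closed_segments_meet_if_orient_opposite:
  assumes AB: "orient A B C * orient A B D < 0" and CD: "orient C D A * orient C D B < 0"
  shows "closed_segment A B \<inter> closed_segment C D \<noteq> {}"
proof -
  define a where "a = orient C D A"
  define b where "b = orient C D B"
  define c where "c = orient A B C"
  define d where "d = orient A B D"
  define s where "s = a / (a - b)"
  define t where "t = c / (c - d)"
  define K where "K = (a - b) * (c - d)"
  have frac01: "0 \<le> x / (x - y) \<and> x / (x - y) \<le> 1" if "x * y < 0" for x y :: real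
    using that by (auto simp: mult_less_0_iff zero_le_divide_iff divide_le_eq_1)
  have "a - b \<noteq> 0" "c - d \<noteq> 0"
    using AB CD unfolding a_def b_def c_def d_def by (metis eq_iff_diff_eq_0 not_square_less_zero)+
  then have K: "K \<noteq> 0" "K * s = a * (c - d)" "K * t = c * (a - b)"
    unfolding K_def s_def t_def by simp_all
  have "K *\<^sub>R ((1 - s) *\<^sub>R A + s *\<^sub>R B) = K *\<^sub>R A + (K * s) *\<^sub>R (B - A)"
    by (simp add: algebra_simps)
  also have "\<dots> = K *\<^sub>R C + (K * t) *\<^sub>R (D - C)"
    unfolding K(2,3) unfolding K_def a_def b_def c_def d_def by (rule orient_cramer_identity)
  finally have "K *\<^sub>R ((1 - s) *\<^sub>R A + s *\<^sub>R B) = K *\<^sub>R ((1 - t) *\<^sub>R C + t *\<^sub>R D)"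
    by (simp add: algebra_simps)
  then have eq: "(1 - s) *\<^sub>R A + s *\<^sub>R B = (1 - t) *\<^sub>R C + t *\<^sub>R D"
    using K(1) by simp
  have "0 \<le> s" "s \<le> 1" "0 \<le> t" "t \<le> 1"
    using frac01[OF AB] frac01[OF CD] unfolding s_def t_def a_def b_def c_def d_def by auto
  then have "(1 - s) *\<^sub>R A + s *\<^sub>R B \<in> closed_segment A B"
    and "(1 - t) *\<^sub>R C + t *\<^sub>R D \<in> closed_segment C D"
    by (auto simp: closed_segment_def)
  with eq show ?thesis by (metis disjoint_iff)
qed

section \<open>Interleaving pairs\<close>

text \<open>Pairs with a common point count as interleaving.\<close>

definition interleave :: "'a::linorder \<Rightarrow> 'a \<Rightarrow> 'a \<Rightarrow> 'a \<Rightarrow> bool" where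
  "interleave x1 x2 y1 y2 \<longleftrightarrow>
     \<not> (min x1 x2 < y1 \<and> y1 < max x1 x2 \<and> min x1 x2 < y2 \<and> y2 < max x1 x2) \<and>
     \<not> ((y1 < min x1 x2 \<or> max x1 x2 < y1) \<and> (y2 < min x1 x2 \<or> max x1 x2 < y2))"

lemma interleave_commute_first: "interleave x2 x1 y1 y2 = interleave x1 x2 y1 y2"
  unfolding interleave_def by (simp add: min.commute max.commute)

lemma interleave_commute_second: "interleave x1 x2 y2 y1 = interleave x1 x2 y1 y2"
  unfolding interleave_def by blast

lemma interleave_swap:
  assumes "distinct [a, b, c, d]"
  shows "interleave a b c d = interleave c d a b"
  using assms unfolding interleave_def min_def max_def by auto

lemma interleave_of_int:
  "interleave (real_of_int a) (real_of_int b) (real_of_int c) (real_of_int d) = interleave a b c d"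
  unfolding interleave_def min_def max_def by simp

lemma interleave_affine:
  fixes a b c d k m :: real
  assumes "k > 0"
  shows "interleave (k * a + m) (k * b + m) (k * c + m) (k * d + m) = interleave a b c d"
  unfolding interleave_def min_def max_def using assms by simp

lemma interleave_mono_image:
  fixes h :: "int \<Rightarrow> int"
  assumes "mono h" "interleave a b c d" "a \<noteq> c" "a \<noteq> d" "b \<noteq> c" "b \<noteq> d"
  shows "interleave (h a) (h b) (h c) (h d)"
proof -
  have m: "x \<le> y \<Longrightarrow> h x \<le> h y" for x y using assms(1) by (simp add: monoD)
  show ?thesis
    using assms(2-) m[of a b] m[of b a] m[of a c] m[of c a] m[of a d] m[of d a]
      m[of b c] m[of c b] m[of b d] m[of d b] m[of c d] m[of d c]
    unfolding interleave_def min_def max_def by smt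
qed

lemma interleave_mono_preimage:
  fixes h :: "int \<Rightarrow> int"
  assumes "mono h" "interleave (h a) (h b) (h c) (h d)"
  shows "interleave a b c d \<or> (\<exists>x\<in>{a, b}. \<exists>y\<in>{c, d}. h x = h y)"
proof -
  have m: "x \<le> y \<Longrightarrow> h x \<le> h y" for x y using assms(1) by (simp add: monoD)
  have "interleave a b c d \<or> h a = h c \<or> h a = h d \<or> h b = h c \<or> h b = h d"
    using assms(2-) m[of a b] m[of b a] m[of a c] m[of c a] m[of a d] m[of d a]
      m[of b c] m[of c b] m[of b d] m[of d b] m[of c d] m[of d c]
    unfolding interleave_def min_def max_def by smt
  then show ?thesis by blast
qed

lemma interleave_rotate_one:
  fixes N :: int
  defines "rot x \<equiv> if x = 1 then N + 1 else x"
  assumes "distinct [a, b, c, d]" "{a, b, c, d} \<subseteq> {1..N}"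
  shows "interleave (rot a) (rot b) (rot c) (rot d) = interleave a b c d"
  using assms unfolding interleave_def min_def max_def by simp smt

section \<open>Chords of the circle\<close>

lemma orient_cis_double:
  fixes a b c :: real
  shows "Im (cnj (cis (2*b) - cis (2*a)) * (cis (2*c) - cis (2*a))) = 4 * sin (c - b) * sin (b - a) * sin (c - a)"
proof -
  have sum3: "sin (2*x) + sin (2*y) - sin (2*x + 2*y) = 4 * sin x * sin y * sin (x + y)" for x y :: real
    unfolding sin_add[of "2*x"] sin_double cos_double sin_add
    using sin_cos_squared_add[of x] sin_cos_squared_add[of y] by algebra
  have "Im (cnj (cis (2*b) - cis (2*a)) * (cis (2*c) - cis (2*a))) =
        sin (2*(c - b)) + sin (2*(b - a)) - sin (2*(c - b) + 2*(b - a))"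
    by (simp add: sin_diff algebra_simps)
  also have "\<dots> = 4 * sin (c - b) * sin (b - a) * sin (c - a)"
    unfolding sum3 by simp
  finally show ?thesis .
qed

lemma orient_circ_pt:
  "orient (circ_pt n a) (circ_pt n b) (circ_pt n c) =
     4 * sin (pi * (b - c) / n) * sin (pi * (a - b) / n) * sin (pi * (a - c) / n)"
proof -
  have double: "circ_pt n x = cis (2 * (- pi * x / n))" for x
    unfolding circ_pt_def by (simp add: algebra_simps)
  show ?thesis
    unfolding double orient_def orient_cis_double by (simp add: algebra_simps diff_divide_distrib)
qed

lemma sin_pi_frac_pos:
  assumes "0 < d" "d < real n"
  shows "sin (pi * d / n) > 0"
proof (rule sin_gt_zero)
  show "0 < pi * d / n" using assms by simp
  have "pi * (d / n) < pi * 1"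
    using assms by (intro mult_strict_left_mono) auto
  then show "pi * d / n < pi" by simp
qed

lemma sin_pi_frac_neg:
  assumes "d < 0" "- d < real n"
  shows "sin (pi * d / n) < 0"
  using sin_pi_frac_pos[of "- d" n] assms by simp

lemma circ_pt_add_period:
  assumes "n > 0"
  shows "circ_pt n (x + real n) = circ_pt n x"
proof -
  have "- 2 * pi * (x + real n) / real n = - 2 * pi * x / real n + (- 2 * pi)"
    using assms by (simp add: field_simps)
  then have "circ_pt n (x + real n) = cis (- 2 * pi * x / real n) * cis (- 2 * pi)"
    unfolding circ_pt_def by (simp add: cis_mult)
  also have "cis (- 2 * pi) = 1"
    using cis_multiple_2pi[of "-1"] by simp
  finally show ?thesis unfolding circ_pt_def by simp
qed

lemma orient_circ_pt_inside:
  assumes "a \<in> {w..<w + real n}" "b \<in> {w..<w + real n}" "a < c" "c < b"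
  shows "orient (circ_pt n a) (circ_pt n b) (circ_pt n c) > 0"
proof -
  have "sin (pi * (a - b) / n) < 0" "sin (pi * (b - c) / n) > 0" "sin (pi * (a - c) / n) < 0"
    using sin_pi_frac_neg[of "a - b" n] sin_pi_frac_pos[of "b - c" n] sin_pi_frac_neg[of "a - c" n]
      assms by auto
  then show ?thesis
    unfolding orient_circ_pt by (simp add: mult_less_0_iff zero_less_mult_iff)
qed

lemma orient_circ_pt_outside:
  assumes "a \<in> {w..<w + real n}" "b \<in> {w..<w + real n}" "c \<in> {w..<w + real n}"
    and "a < b" "c < a \<or> b < c"
  shows "orient (circ_pt n a) (circ_pt n b) (circ_pt n c) < 0"
proof -
  have neg: "sin (pi * (a - b) / n) < 0"
    using sin_pi_frac_neg[of "a - b" n] assms by auto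
  consider "c < a" | "b < c" using assms(5) by blast
  then show ?thesis
  proof cases
    case 1
    then have "sin (pi * (b - c) / n) > 0" "sin (pi * (a - c) / n) > 0"
      using sin_pi_frac_pos[of "b - c" n] sin_pi_frac_pos[of "a - c" n] assms by auto
    with neg show ?thesis
      unfolding orient_circ_pt by (simp add: mult_less_0_iff zero_less_mult_iff)
  next
    case 2
    then have "sin (pi * (b - c) / n) < 0" "sin (pi * (a - c) / n) < 0"
      using sin_pi_frac_neg[of "b - c" n] sin_pi_frac_neg[of "a - c" n] assms by auto
    with neg show ?thesis
      unfolding orient_circ_pt by (simp add: mult_less_0_iff zero_less_mult_iff)
  qed
qed

lemma circ_pt_on_chord:
  assumes W: "a \<in> {w..<w + real n}" "b \<in> {w..<w + real n}" "c \<in> {w..<w + real n}"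
    and "a \<le> b" and on: "circ_pt n c \<in> closed_segment (circ_pt n a) (circ_pt n b)"
  shows "c = a \<or> c = b"
proof (rule ccontr)
  assume ne: "\<not> (c = a \<or> c = b)"
  have zero: "orient (circ_pt n a) (circ_pt n b) (circ_pt n c) = 0"
    by (rule orient_closed_segment_eq_0[OF on])
  show False
  proof (cases "a < b")
    case True
    with ne consider "a < c" "c < b" | "c < a \<or> b < c" by linarith
    then show False
    proof cases
      case 1
      with orient_circ_pt_inside[OF W(1,2) 1] zero show False by simp
    next
      case 2
      with orient_circ_pt_outside[OF W True 2] zero show False by simp
    qed
  next
    case False
    with \<open>a \<le> b\<close> on have same: "circ_pt n c = circ_pt n a" by simp
    from ne consider "a < c" | "c < a" by linarith
    then show False
    proof cases
      case 1
      with orient_circ_pt_inside[of a w n c "(a + c) / 2"] W same show False by (simp add: orient_def)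
    next
      case 2
      with orient_circ_pt_inside[of c w n a "(a + c) / 2"] W same show False by (simp add: orient_def)
    qed
  qed
qed

lemma interleave_if_circ_chords_meet:
  assumes W: "x1 \<in> {w..<w + real n}" "x2 \<in> {w..<w + real n}" "y1 \<in> {w..<w + real n}" "y2 \<in> {w..<w + real n}"
    and "x1 \<le> x2" "y1 \<le> y2"
    and zX: "z \<in> closed_segment (circ_pt n x1) (circ_pt n x2)"
    and zY: "z \<in> closed_segment (circ_pt n y1) (circ_pt n y2)"
  shows "interleave x1 x2 y1 y2"
proof -
  have zero: "orient (circ_pt n x1) (circ_pt n x2) z = 0"
    by (rule orient_closed_segment_eq_0[OF zX])
  have not_inside: "\<not> (x1 < y1 \<and> y1 < x2 \<and> x1 < y2 \<and> y2 < x2)"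
  proof
    assume "x1 < y1 \<and> y1 < x2 \<and> x1 < y2 \<and> y2 < x2"
    then have "orient (circ_pt n x1) (circ_pt n x2) z > 0"
      using W by (intro orient_closed_segment_pos[OF zY] orient_circ_pt_inside) auto
    with zero show False by simp
  qed
  have not_outside: "\<not> ((y1 < x1 \<or> x2 < y1) \<and> (y2 < x1 \<or> x2 < y2))"
  proof
    assume out: "(y1 < x1 \<or> x2 < y1) \<and> (y2 < x1 \<or> x2 < y2)"
    show False
    proof (cases "x1 < x2")
      case True
      with out W have "orient (circ_pt n x1) (circ_pt n x2) z < 0"
        by (intro orient_closed_segment_neg[OF zY] orient_circ_pt_outside) auto
      with zero show False by simp
    next
      case False
      with \<open>x1 \<le> x2\<close> zX have "x2 = x1" "circ_pt n x1 \<in> closed_segment (circ_pt n y1) (circ_pt n y2)"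
        using zY by auto
      with circ_pt_on_chord[OF W(3,4,1) \<open>y1 \<le> y2\<close>] out show False by auto
    qed
  qed
  from not_inside not_outside \<open>x1 \<le> x2\<close> show ?thesis
    unfolding interleave_def by (simp add: min_def max_def)
qed

lemma circ_chords_meet_if_interleave:
  assumes W: "x1 \<in> {w..<w + real n}" "x2 \<in> {w..<w + real n}" "y1 \<in> {w..<w + real n}" "y2 \<in> {w..<w + real n}"
    and "x1 \<le> x2" "y1 \<le> y2" and I: "interleave x1 x2 y1 y2"
  shows "closed_segment (circ_pt n x1) (circ_pt n x2) \<inter> closed_segment (circ_pt n y1) (circ_pt n y2) \<noteq> {}"
proof (cases "x1 = y1 \<or> x1 = y2 \<or> x2 = y1 \<or> x2 = y2")
  case True
  then show ?thesis by auto
next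
  case False
  let ?A = "circ_pt n x1" and ?B = "circ_pt n x2" and ?C = "circ_pt n y1" and ?D = "circ_pt n y2"
  from I False \<open>x1 \<le> x2\<close> \<open>y1 \<le> y2\<close>
  consider "x1 < y1" "y1 < x2" "x2 < y2" | "y1 < x1" "x1 < y2" "y2 < x2"
    unfolding interleave_def min_def max_def by fastforce
  then show ?thesis
  proof cases
    case 1
    then have "orient ?A ?B ?C > 0" "orient ?A ?B ?D < 0" "orient ?C ?D ?A < 0" "orient ?C ?D ?B > 0"
      using orient_circ_pt_inside[OF W(1,2)] orient_circ_pt_outside[OF W(1,2,4)]
        orient_circ_pt_outside[OF W(3,4,1)] orient_circ_pt_inside[OF W(3,4)] by auto
    then show ?thesis
      by (intro closed_segments_meet_if_orient_opposite) (auto simp: mult_less_0_iff)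
  next
    case 2
    then have "orient ?A ?B ?C < 0" "orient ?A ?B ?D > 0" "orient ?C ?D ?A > 0" "orient ?C ?D ?B < 0"
      using orient_circ_pt_outside[OF W(1,2,3)] orient_circ_pt_inside[OF W(1,2)]
        orient_circ_pt_inside[OF W(3,4)] orient_circ_pt_outside[OF W(3,4,2)] by auto
    then show ?thesis
      by (intro closed_segments_meet_if_orient_opposite) (auto simp: mult_less_0_iff)
  qed
qed

lemma circ_chords_meet_iff:
  assumes W: "x1 \<in> {w..<w + real n}" "x2 \<in> {w..<w + real n}" "y1 \<in> {w..<w + real n}" "y2 \<in> {w..<w + real n}"
  shows "closed_segment (circ_pt n x1) (circ_pt n x2) \<inter> closed_segment (circ_pt n y1) (circ_pt n y2) \<noteq> {}
     \<longleftrightarrow> interleave x1 x2 y1 y2"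
proof -
  have ordered: "closed_segment (circ_pt n a1) (circ_pt n a2) \<inter> closed_segment (circ_pt n b1) (circ_pt n b2) \<noteq> {}
     \<longleftrightarrow> interleave a1 a2 b1 b2"
    if "{a1, a2, b1, b2} \<subseteq> {w..<w + real n}" "a1 \<le> a2" "b1 \<le> b2" for a1 a2 b1 b2
    using that interleave_if_circ_chords_meet[of a1 w n a2 b1 b2] circ_chords_meet_if_interleave[of a1 w n a2 b1 b2]
    by auto
  show ?thesis
    using ordered[of "min x1 x2" "max x1 x2" "min y1 y2" "max y1 y2"] W
    by (cases "x1 \<le> x2"; cases "y1 \<le> y2")
      (simp_all add: min_def max_def closed_segment_commute interleave_commute_first interleave_commute_second)
qed


definition count_le2 :: "int \<Rightarrow> int \<Rightarrow> int \<Rightarrow> int" where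
  "count_le2 a b z = (if a \<le> z then 1 else 0) + (if b \<le> z then 1 else 0)"

lemma count_le2_add1:
  "count_le2 a b (z + 1) = count_le2 a b z + (if a = z + 1 then 1 else 0) + (if b = z + 1 then 1 else 0)"
  unfolding count_le2_def by auto

lemma even_count_le2_diff_if_not_interleave:
  assumes "\<not> interleave a b x y" "a \<noteq> x" "a \<noteq> y" "b \<noteq> x" "b \<noteq> y"
  shows "even (count_le2 a b x - count_le2 a b y)"
proof -
  let ?d = "count_le2 a b x - count_le2 a b y"
  have "?d = -2 \<or> ?d = 0 \<or> ?d = 2"
    using assms unfolding interleave_def count_le2_def min_def max_def by smt
  then show ?thesis by (metis dvd_0_right dvd_minus_iff dvd_refl)
qed

lemma even_count_le2_diff_if_interleave:
  assumes "interleave x y x' y'" "\<not> interleave a b x y" "\<not> interleave a b x' y'"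
    and "distinct [a, b, x, y, x', y']"
  shows "even (count_le2 a b x - count_le2 a b x')"
proof -
  let ?d = "count_le2 a b x - count_le2 a b x'"
  have "?d = -2 \<or> ?d = 0 \<or> ?d = 2"
    using assms unfolding interleave_def count_le2_def min_def max_def by simp smt
  then show ?thesis by (metis dvd_0_right dvd_minus_iff dvd_refl)
qed

lemma even_diff_trans: "even ((a::int) - b) \<Longrightarrow> even (b - c) \<Longrightarrow> even (a - c)"
  using dvd_add[of 2 "a - b" "b - c"] by simp

lemma even_diff_commute: "even ((a::int) - b) \<longleftrightarrow> even (b - a)"
  by (metis dvd_minus_iff minus_diff_eq)

lemma sum_indicators_le_odd_even:
  "x \<ge> 0 \<Longrightarrow>
     (\<Sum>r\<in>{1..int m}. (if 2 * r - 1 \<le> x then 1 else 0) + (if 2 * r \<le> x then 1 else 0)) = min x (2 * int m)"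
proof (induction m)
  case (Suc m)
  have "{1..int (Suc m)} = insert (int m + 1) {1..int m}" by auto
  with Suc show ?case by simp
qed simp

section \<open>Strands in doubled coordinates\<close>

lemma div2_add1_eq_imp_adjacent:
  fixes a b :: int
  assumes "(a + 1) div 2 = (b + 1) div 2" "a \<noteq> b"
  shows "(odd a \<and> b = a + 1) \<or> (odd b \<and> a = b + 1)"
  using assms by presburger

lemma div2_rotated_eq_imp_adjacent:
  fixes a b N :: int
  defines "rot x \<equiv> if x = 1 then 2 * N + 1 else x"
  assumes "a \<in> {1..2 * N}" "b \<in> {1..2 * N}" "a \<noteq> b" "rot a div 2 = rot b div 2"
  shows "(even a \<and> b = a + 1) \<or> (even b \<and> a = b + 1) \<or> (a = 2 * N \<and> b = 1) \<or> (b = 2 * N \<and> a = 1)"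
  using assms by (auto split: if_splits) presburger+

text \<open>A permutation \<open>\<sigma>\<close> of \<open>[n]\<close> (later the inverse of \<open>fbar n f\<close>) describes the strands
  \<open>S\<^sub>p : \<sigma>(p)\<^sup>+ \<rightarrow> p\<^sup>-\<close>. We use doubled coordinates: \<open>z \<in> {1..2n}\<close> stands for the circle
  position \<open>z / 2 + 1 / 4\<close>, so \<open>S\<^sub>p\<close> runs from its tail \<open>2 \<sigma>(p)\<close> to its head \<open>2p - 1\<close>.\<close>

locale strands =
  fixes n :: nat and \<sigma> :: "int \<Rightarrow> int"
  assumes n_pos: "n > 0" and sigma_bij: "bij_betw \<sigma> (idx n) (idx n)"
begin

definition head :: "int \<Rightarrow> int" where
  "head p = 2 * p - 1"

definition tail :: "int \<Rightarrow> int" where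
  "tail p = 2 * \<sigma> p"

definition is_end :: "int \<Rightarrow> int \<Rightarrow> bool" where
  "is_end p x \<longleftrightarrow> x = head p \<or> x = tail p"

definition crosses :: "int \<Rightarrow> int \<Rightarrow> bool" where
  "crosses p q \<longleftrightarrow> interleave (tail p) (head p) (tail q) (head q)"

definition cross_graph :: "(int \<times> int) set" where
  "cross_graph = {(p, q). p \<in> idx n \<and> q \<in> idx n \<and> p \<noteq> q \<and> crosses p q}"

text \<open>Some end of \<open>S\<^sub>p\<close> and some end of \<open>S\<^sub>q\<close> become the same point \<open>b\<^sub>i\<close> when the pairs
  \<open>2i - 1, 2i\<close> (for \<open>G\<^sup>H\<^sub>f\<close>), resp. the cyclic pairs \<open>2i, 2i + 1\<close> (for \<open>G\<^sup>H\<^sub>f\<^sub>\<down>\<close>), are merged.\<close>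

definition hook_adj :: "int \<Rightarrow> int \<Rightarrow> bool" where
  "hook_adj p q \<longleftrightarrow>
     (\<exists>x y. is_end p x \<and> is_end q y \<and> ((odd x \<and> y = x + 1) \<or> (odd y \<and> x = y + 1)))"

definition down_adj :: "int \<Rightarrow> int \<Rightarrow> bool" where
  "down_adj p q \<longleftrightarrow>
     (\<exists>x y. is_end p x \<and> is_end q y \<and>
        ((even x \<and> y = x + 1) \<or> (even y \<and> x = y + 1) \<or> (x = 2 * int n \<and> y = 1) \<or> (y = 2 * int n \<and> x = 1)))"

lemma sigma_in: "p \<in> idx n \<Longrightarrow> \<sigma> p \<in> idx n"
  using sigma_bij by (auto simp: bij_betw_def)

lemma sigma_inj: "p \<in> idx n \<Longrightarrow> q \<in> idx n \<Longrightarrow> \<sigma> p = \<sigma> q \<Longrightarrow> p = q"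
  using sigma_bij by (auto simp: bij_betw_def inj_on_def)

lemma ends_range: "p \<in> idx n \<Longrightarrow> head p \<in> {1..2 * int n} \<and> tail p \<in> {1..2 * int n}"
  using sigma_in[of p] unfolding head_def tail_def by auto

lemma end_range: "p \<in> idx n \<Longrightarrow> is_end p x \<Longrightarrow> x \<in> {1..2 * int n}"
  using ends_range[of p] unfolding is_end_def by auto

lemma odd_ne_even: "2 * a - 1 \<noteq> 2 * (b::int)"
  by presburger

lemma end_unique: "p \<in> idx n \<Longrightarrow> q \<in> idx n \<Longrightarrow> is_end p x \<Longrightarrow> is_end q x \<Longrightarrow> p = q"
  using sigma_inj[of p q] odd_ne_even[of p "\<sigma> q"] odd_ne_even[of q "\<sigma> p"]
  unfolding is_end_def head_def tail_def by auto

lemma ends_distinct: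
  "p \<in> idx n \<Longrightarrow> q \<in> idx n \<Longrightarrow> p \<noteq> q \<Longrightarrow> distinct [tail p, head p, tail q, head q]"
  using sigma_inj[of p q] odd_ne_even[of p "\<sigma> p"] odd_ne_even[of q "\<sigma> q"]
    odd_ne_even[of p "\<sigma> q"] odd_ne_even[of q "\<sigma> p"]
  unfolding head_def tail_def by auto

lemma crosses_commute: "p \<in> idx n \<Longrightarrow> q \<in> idx n \<Longrightarrow> p \<noteq> q \<Longrightarrow> crosses p q = crosses q p"
  unfolding crosses_def by (rule interleave_swap[OF ends_distinct])

lemma bplus_bminus_meet_iff_crosses:
  assumes "p \<in> idx n" "q \<in> idx n"
  shows "closed_segment (bplus n (\<sigma> p)) (bminus n p) \<inter> closed_segment (bplus n (\<sigma> q)) (bminus n q) \<noteq> {}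
     \<longleftrightarrow> crosses p q"
proof -
  let ?pos = "\<lambda>z. 1 / 2 * real_of_int z + 1 / 4"
  have pos: "bplus n (\<sigma> r) = circ_pt n (?pos (tail r))" "bminus n r = circ_pt n (?pos (head r))" for r
    unfolding bplus_def bminus_def tail_def head_def by (simp_all add: field_simps)
  have window: "?pos z \<in> {3 / 4..<3 / 4 + real n}" if "z \<in> {1..2 * int n}" for z
    using that by simp
  have "closed_segment (bplus n (\<sigma> p)) (bminus n p) \<inter> closed_segment (bplus n (\<sigma> q)) (bminus n q) \<noteq> {}
     \<longleftrightarrow> interleave (?pos (tail p)) (?pos (head p)) (?pos (tail q)) (?pos (head q))"
    unfolding pos
    by (rule circ_chords_meet_iff[where w = "3 / 4"]) (use window ends_range[OF assms(1)] ends_range[OF assms(2)] in auto)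
  also have "\<dots> \<longleftrightarrow> interleave (real_of_int (tail p)) (real_of_int (head p)) (real_of_int (tail q)) (real_of_int (head q))"
    by (rule interleave_affine) simp
  also have "\<dots> \<longleftrightarrow> crosses p q"
    unfolding interleave_of_int crosses_def ..
  finally show ?thesis .
qed

lemma bpt_meet_iff_interleave:
  assumes "p \<in> idx n" "q \<in> idx n"
  shows "closed_segment (bpt n (\<sigma> p)) (bpt n p) \<inter> closed_segment (bpt n (\<sigma> q)) (bpt n q) \<noteq> {}
     \<longleftrightarrow> interleave (\<sigma> p) p (\<sigma> q) q"
proof -
  have window: "real_of_int v \<in> {1..<1 + real n}" if "v \<in> idx n" for v
    using that by simp
  have "closed_segment (bpt n (\<sigma> p)) (bpt n p) \<inter> closed_segment (bpt n (\<sigma> q)) (bpt n q) \<noteq> {}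
     \<longleftrightarrow> interleave (real_of_int (\<sigma> p)) (real_of_int p) (real_of_int (\<sigma> q)) (real_of_int q)"
    unfolding bpt_def
    by (rule circ_chords_meet_iff[OF window[OF sigma_in[OF assms(1)]] window[OF assms(1)]
          window[OF sigma_in[OF assms(2)]] window[OF assms(2)]])
  then show ?thesis by (simp only: interleave_of_int)
qed

lemma crosses_imp_hook_interleave:
  assumes "p \<in> idx n" "q \<in> idx n" "p \<noteq> q" "crosses p q"
  shows "interleave (\<sigma> p) p (\<sigma> q) q"
proof -
  let ?merge = "\<lambda>z::int. (z + 1) div 2"
  have "mono ?merge" by (auto intro!: monoI zdiv_mono1)
  from interleave_mono_image[OF this, of "tail p" "head p" "tail q" "head q"]
  have "interleave (?merge (tail p)) (?merge (head p)) (?merge (tail q)) (?merge (head q))"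
    using assms(4) ends_distinct[OF assms(1-3)] unfolding crosses_def by simp
  then show ?thesis unfolding head_def tail_def by simp
qed

lemma hook_interleave_imp_crosses_or_adj:
  assumes "p \<in> idx n" "q \<in> idx n" "p \<noteq> q" "interleave (\<sigma> p) p (\<sigma> q) q"
  shows "crosses p q \<or> hook_adj p q"
proof -
  let ?merge = "\<lambda>z::int. (z + 1) div 2"
  have "mono ?merge" by (auto intro!: monoI zdiv_mono1)
  moreover have "interleave (?merge (tail p)) (?merge (head p)) (?merge (tail q)) (?merge (head q))"
    using assms(4) unfolding head_def tail_def by simp
  ultimately have "crosses p q \<or> (\<exists>x\<in>{tail p, head p}. \<exists>y\<in>{tail q, head q}. ?merge x = ?merge y)"
    unfolding crosses_def by (rule interleave_mono_preimage)
  moreover have "hook_adj p q" if "x \<in> {tail p, head p}" "y \<in> {tail q, head q}" "?merge x = ?merge y" for x y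
  proof -
    from that ends_distinct[OF assms(1-3)] have "x \<noteq> y" by auto
    with that div2_add1_eq_imp_adjacent[of x y] show ?thesis
      unfolding hook_adj_def is_end_def by blast
  qed
  ultimately show ?thesis by blast
qed

text \<open>For \<open>f\<^sub>\<down>\<close> the segment ending at \<open>b\<^sub>p\<close> starts at \<open>b\<^sub>s\<close> with \<open>s = \<sigma>(p) + 1\<close>, taken
  cyclically. Moving the point \<open>1\<close> of the circle to \<open>n + 1\<close> (resp. \<open>2n + 1\<close> in doubled
  coordinates) makes the merging of the pairs \<open>2i, 2i + 1\<close> monotone.\<close>

definition down_src :: "int \<Rightarrow> int" where
  "down_src p = (if \<sigma> p = int n then 1 else \<sigma> p + 1)"

definition lift :: "int \<Rightarrow> int" where
  "lift v = (if v = 1 then int n + 1 else v)"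

definition rot :: "int \<Rightarrow> int" where
  "rot x = (if x = 1 then 2 * int n + 1 else x)"

lemma down_src_in: "p \<in> idx n \<Longrightarrow> down_src p \<in> idx n"
  using sigma_in[of p] n_pos unfolding down_src_def by auto

lemma bpt_lift: "bpt n v = circ_pt n (real_of_int (lift v))"
  unfolding bpt_def lift_def using circ_pt_add_period[OF n_pos, of 1] by (auto simp: add.commute)

lemma bpt_down_meet_iff_interleave:
  assumes "p \<in> idx n" "q \<in> idx n"
  shows "closed_segment (bpt n (down_src p)) (bpt n p) \<inter> closed_segment (bpt n (down_src q)) (bpt n q) \<noteq> {}
     \<longleftrightarrow> interleave (lift (down_src p)) (lift p) (lift (down_src q)) (lift q)"
proof -
  have window: "real_of_int (lift v) \<in> {2..<2 + real n}" if "v \<in> idx n" for v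
  proof -
    have "lift v \<in> {2..int n + 1}" using that n_pos unfolding lift_def by auto
    then show ?thesis by simp
  qed
  have "closed_segment (bpt n (down_src p)) (bpt n p) \<inter> closed_segment (bpt n (down_src q)) (bpt n q) \<noteq> {}
     \<longleftrightarrow> interleave (real_of_int (lift (down_src p))) (real_of_int (lift p))
           (real_of_int (lift (down_src q))) (real_of_int (lift q))"
    unfolding bpt_lift
    by (rule circ_chords_meet_iff[OF window[OF down_src_in[OF assms(1)]] window[OF assms(1)]
          window[OF down_src_in[OF assms(2)]] window[OF assms(2)]])
  then show ?thesis by (simp only: interleave_of_int)
qed

lemma lift_down_src_eq: "p \<in> idx n \<Longrightarrow> lift (down_src p) = rot (tail p) div 2 + 1"
  using sigma_in[of p] unfolding lift_def down_src_def rot_def tail_def by auto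

lemma lift_eq: "p \<in> idx n \<Longrightarrow> lift p = rot (head p) div 2 + 1"
  unfolding lift_def rot_def head_def by auto

lemma crosses_iff_rotated:
  assumes "p \<in> idx n" "q \<in> idx n" "p \<noteq> q"
  shows "crosses p q \<longleftrightarrow> interleave (rot (tail p)) (rot (head p)) (rot (tail q)) (rot (head q))"
  unfolding rot_def crosses_def
  using interleave_rotate_one[of _ _ _ _ "2 * int n"] ends_distinct[OF assms] ends_range[OF assms(1)]
    ends_range[OF assms(2)] by auto

lemma crosses_imp_down_interleave:
  assumes "p \<in> idx n" "q \<in> idx n" "p \<noteq> q" "crosses p q"
  shows "interleave (lift (down_src p)) (lift p) (lift (down_src q)) (lift q)"
proof -
  let ?merge = "\<lambda>z::int. z div 2 + 1"
  have "mono ?merge" by (auto intro!: monoI zdiv_mono1)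
  moreover have "distinct [rot (tail p), rot (head p), rot (tail q), rot (head q)]"
    using ends_distinct[OF assms(1-3)] ends_range[OF assms(1)] ends_range[OF assms(2)]
    unfolding rot_def by auto
  ultimately have "interleave (?merge (rot (tail p))) (?merge (rot (head p))) (?merge (rot (tail q))) (?merge (rot (head q)))"
    using crosses_iff_rotated[OF assms(1-3)] assms(4)
      interleave_mono_image[of ?merge "rot (tail p)" "rot (head p)" "rot (tail q)" "rot (head q)"]
    by simp
  then show ?thesis
    using lift_down_src_eq lift_eq assms(1,2) by simp
qed

lemma down_interleave_imp_crosses_or_adj:
  assumes "p \<in> idx n" "q \<in> idx n" "p \<noteq> q"
    and "interleave (lift (down_src p)) (lift p) (lift (down_src q)) (lift q)"
  shows "crosses p q \<or> down_adj p q"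
proof -
  let ?merge = "\<lambda>z::int. z div 2 + 1"
  have "mono ?merge" by (auto intro!: monoI zdiv_mono1)
  moreover have "interleave (?merge (rot (tail p))) (?merge (rot (head p))) (?merge (rot (tail q))) (?merge (rot (head q)))"
    using assms(4) lift_down_src_eq lift_eq assms(1,2) by simp
  ultimately have "interleave (rot (tail p)) (rot (head p)) (rot (tail q)) (rot (head q)) \<or>
      (\<exists>x\<in>{rot (tail p), rot (head p)}. \<exists>y\<in>{rot (tail q), rot (head q)}. ?merge x = ?merge y)"
    by (rule interleave_mono_preimage)
  moreover have "down_adj p q"
    if "x \<in> {tail p, head p}" "y \<in> {tail q, head q}" "rot x div 2 = rot y div 2" for x y
  proof -
    from that ends_distinct[OF assms(1-3)] have "x \<noteq> y" by auto
    moreover have "x \<in> {1..2 * int n}" "y \<in> {1..2 * int n}"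
      using that ends_range[OF assms(1)] ends_range[OF assms(2)] by auto
    ultimately have "(even x \<and> y = x + 1) \<or> (even y \<and> x = y + 1) \<or> (x = 2 * int n \<and> y = 1) \<or> (y = 2 * int n \<and> x = 1)"
      using that(3) div2_rotated_eq_imp_adjacent[of x "int n" y] unfolding rot_def by simp
    with that show ?thesis
      unfolding down_adj_def is_end_def by blast
  qed
  ultimately show ?thesis
    using crosses_iff_rotated[OF assms(1-3)] by auto
qed

end

section \<open>A parity invariant of crossing components\<close>

context strands
begin

definition ends_below :: "int \<Rightarrow> int \<Rightarrow> int" where
  "ends_below r z = count_le2 (tail r) (head r) z"

definition weight :: "int set \<Rightarrow> int \<Rightarrow> int" where
  "weight B z = (\<Sum>u\<in>B. ends_below u z)"

lemma sum_ends_below: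
  assumes "0 \<le> z" "z \<le> 2 * int n"
  shows "(\<Sum>r\<in>idx n. ends_below r z) = z"
proof -
  let ?ind = "\<lambda>P. if P then 1 else (0::int)"
  have "(\<Sum>r\<in>idx n. ends_below r z) = (\<Sum>r\<in>idx n. ?ind (2 * \<sigma> r \<le> z)) + (\<Sum>r\<in>idx n. ?ind (2 * r - 1 \<le> z))"
    unfolding ends_below_def count_le2_def head_def tail_def by (simp add: sum.distrib)
  also have "(\<Sum>r\<in>idx n. ?ind (2 * \<sigma> r \<le> z)) = (\<Sum>r\<in>idx n. ?ind (2 * r \<le> z))"
    using sum.reindex_bij_betw[OF sigma_bij, of "\<lambda>r. ?ind (2 * r \<le> z)"] by simp
  also have "\<dots> + (\<Sum>r\<in>idx n. ?ind (2 * r - 1 \<le> z)) = (\<Sum>r\<in>idx n. ?ind (2 * r - 1 \<le> z) + ?ind (2 * r \<le> z))"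
    by (simp add: sum.distrib)
  also have "\<dots> = z"
    using sum_indicators_le_odd_even[of z n] assms by simp
  finally show ?thesis .
qed

lemma weight_add1:
  "weight B (z + 1) = weight B z + (\<Sum>u\<in>B. (if tail u = z + 1 then 1 else 0) + (if head u = z + 1 then 1 else 0))"
  unfolding weight_def ends_below_def count_le2_add1 by (simp add: sum.distrib algebra_simps)

lemma weight_add1_not_end:
  assumes "\<And>u. u \<in> B \<Longrightarrow> \<not> is_end u (z + 1)"
  shows "weight B (z + 1) = weight B z"
proof -
  have "(\<Sum>u\<in>B. (if tail u = z + 1 then 1 else 0) + (if head u = z + 1 then 1 else (0::int))) = 0"
  proof (intro sum.neutral ballI)
    fix u assume "u \<in> B"
    from assms[OF this] have "tail u \<noteq> z + 1" "head u \<noteq> z + 1" unfolding is_end_def by auto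
    then show "(if tail u = z + 1 then 1 else 0) + (if head u = z + 1 then 1 else (0::int)) = 0" by simp
  qed
  then show ?thesis by (simp add: weight_add1)
qed

lemma weight_add1_end:
  assumes "B \<subseteq> idx n" "u0 \<in> B" "is_end u0 (z + 1)"
  shows "weight B (z + 1) = weight B z + 1"
proof -
  have "(if tail u = z + 1 then 1 else 0) + (if head u = z + 1 then 1 else (0::int)) = (if u = u0 then 1 else 0)"
    if "u \<in> B" for u
  proof (cases "u = u0")
    case True
    with assms(3) odd_ne_even[of u0 "\<sigma> u0"] show ?thesis
      unfolding is_end_def head_def tail_def by auto
  next
    case False
    have "u \<in> idx n" "u0 \<in> idx n" using that assms(1,2) by auto
    with False end_unique[of u u0 "z + 1"] assms(3) show ?thesis
      unfolding is_end_def by auto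
  qed
  then have "(\<Sum>u\<in>B. (if tail u = z + 1 then 1 else 0) + (if head u = z + 1 then 1 else (0::int))) = 1"
    using assms(2) finite_subset[OF assms(1)] by (simp cong: sum.cong)
  then show ?thesis unfolding weight_add1[of B z] by simp
qed

lemma weight_0: "B \<subseteq> idx n \<Longrightarrow> weight B 0 = 0"
  using sigma_in unfolding weight_def ends_below_def count_le2_def head_def tail_def
  by (intro sum.neutral) force

lemma even_weight_top: "B \<subseteq> idx n \<Longrightarrow> even (weight B (2 * int n))"
  using sigma_in unfolding weight_def ends_below_def count_le2_def head_def tail_def
  by (intro dvd_sum) force

lemma even_ends_below_diff_if_not_crosses:
  assumes "u \<in> idx n" "r \<in> idx n" "u \<noteq> r" "\<not> crosses u r" "is_end r x" "is_end r y"
  shows "even (ends_below u x - ends_below u y)"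
proof -
  have "even (ends_below u (tail r) - ends_below u (head r))"
    unfolding ends_below_def using assms(4) ends_distinct[OF assms(1-3)]
    by (intro even_count_le2_diff_if_not_interleave) (auto simp: crosses_def)
  with assms(5,6) show ?thesis
    unfolding is_end_def by (auto simp: even_diff_commute)
qed

lemma even_ends_below_diff_if_crosses:
  assumes "u \<in> idx n" "r \<in> idx n" "r' \<in> idx n" "u \<noteq> r" "u \<noteq> r'" "r \<noteq> r'"
    and "crosses r r'" "\<not> crosses u r" "\<not> crosses u r'"
  shows "even (ends_below u (tail r) - ends_below u (tail r'))"
proof -
  have "distinct [tail u, head u, tail r, head r, tail r', head r']"
    using ends_distinct[OF assms(1,2,4)] ends_distinct[OF assms(1,3,5)] ends_distinct[OF assms(2,3,6)]
    by auto
  with assms(7-9) show ?thesis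
    unfolding ends_below_def crosses_def by (intro even_count_le2_diff_if_interleave) auto
qed

end

text \<open>No strand outside \<open>B\<close> crosses a strand of \<open>B\<close>, so
  every strand of \<open>B\<close> has both ends of an outside strand \<open>r\<close> on the same side: the parity of
  \<open>weight B\<close> is constant on the ends of \<open>r\<close> (its \<open>potential\<close>), and it does not change along
  crossings outside \<open>B\<close>. Symmetrically, the parity of \<open>z - weight B z\<close> is the same at all ends
  \<open>z\<close> of strands of \<open>B\<close> (the \<open>offset\<close>). As \<open>weight B\<close> only changes at ends of strands of \<open>B\<close>,
  adjacencies between outside strands preserve the potential, whereas the two kinds of adjacency
  to a strand of \<open>B\<close> give opposite parities.\<close>

locale cross_component = strands +
  fixes p :: int and B :: "int set"
  assumes p_in: "p \<in> idx n" and B_eq: "B = {r \<in> idx n. (p, r) \<in> cross_graph\<^sup>*}"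
begin

lemma B_subset: "B \<subseteq> idx n"
  using B_eq by auto

lemma p_in_B: "p \<in> B"
  using B_eq p_in by auto

lemma not_crosses_outside:
  assumes "u \<in> B" "r \<in> idx n - B"
  shows "\<not> crosses u r" "\<not> crosses r u" "u \<noteq> r"
proof -
  have u: "u \<in> idx n" "(p, u) \<in> cross_graph\<^sup>*"
    using assms B_eq by auto
  show ne: "u \<noteq> r" using assms by auto
  show not_ur: "\<not> crosses u r"
  proof
    assume "crosses u r"
    with u assms ne have "(u, r) \<in> cross_graph" unfolding cross_graph_def by auto
    with u(2) have "(p, r) \<in> cross_graph\<^sup>*" by simp
    with assms B_eq show False by auto
  qed
  from not_ur crosses_commute[of u r] u assms ne show "\<not> crosses r u" by auto
qed

lemma even_ends_below_diff_reachable: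
  assumes r: "r \<in> idx n - B" and "(p, u) \<in> cross_graph\<^sup>*" "is_end u x"
  shows "even (ends_below r x - ends_below r (head p))"
  using assms(2,3)
proof (induction arbitrary: x rule: rtrancl_induct)
  case base
  then show ?case
    using r not_crosses_outside[OF p_in_B r]
    by (intro even_ends_below_diff_if_not_crosses[OF _ p_in]) (auto simp: is_end_def)
next
  case (step u u')
  have u: "u \<in> idx n" "u' \<in> idx n" "u \<noteq> u'" "crosses u u'"
    using step(2) unfolding cross_graph_def by auto
  with step(1,2) B_eq have uB: "u \<in> B" "u' \<in> B" by auto
  have "even (ends_below r (tail u) - ends_below r (head p))"
    using step(3)[of "tail u"] by (simp add: is_end_def)
  moreover have "even (ends_below r (tail u') - ends_below r (tail u))"
    using even_ends_below_diff_if_crosses[of r u' u] u r crosses_commute[of u u']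
      not_crosses_outside[OF uB(1) r] not_crosses_outside[OF uB(2) r] by auto
  moreover have "even (ends_below r x - ends_below r (tail u'))"
    using r not_crosses_outside[OF uB(2) r] u step(4)
    by (intro even_ends_below_diff_if_not_crosses) (auto simp: is_end_def)
  ultimately show ?case by (metis even_diff_trans)
qed

definition offset :: int where
  "offset = head p - weight B (head p)"

lemma even_end_minus_weight:
  assumes "u \<in> B" "is_end u x"
  shows "even ((x - weight B x) - offset)"
proof -
  have u: "u \<in> idx n" "(p, u) \<in> cross_graph\<^sup>*"
    using assms B_eq by auto
  have outside_sum: "z - weight B z = (\<Sum>r\<in>idx n - B. ends_below r z)" if "z \<in> {1..2 * int n}" for z
  proof -
    have "z = (\<Sum>r\<in>idx n. ends_below r z)" using sum_ends_below that by simp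
    also have "\<dots> = (\<Sum>r\<in>idx n - B. ends_below r z) + weight B z"
      unfolding weight_def using sum.subset_diff[OF B_subset] by simp
    finally show ?thesis by simp
  qed
  have "x - weight B x = (\<Sum>r\<in>idx n - B. ends_below r x)"
    using outside_sum end_range[OF u(1) assms(2)] by simp
  moreover have "offset = (\<Sum>r\<in>idx n - B. ends_below r (head p))"
    unfolding offset_def using outside_sum end_range[OF p_in, of "head p"] by (simp add: is_end_def)
  ultimately have "(x - weight B x) - offset = (\<Sum>r\<in>idx n - B. ends_below r x - ends_below r (head p))"
    by (simp add: sum_subtractf)
  also have "even \<dots>"
    by (rule dvd_sum) (rule even_ends_below_diff_reachable[OF _ u(2) assms(2)], simp)
  finally show ?thesis .
qed

definition potential :: "int \<Rightarrow> int" where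
  "potential r = weight B (tail r)"

lemma even_weight_minus_potential:
  assumes "r \<in> idx n - B" "is_end r x"
  shows "even (weight B x - potential r)"
proof -
  have "weight B x - potential r = (\<Sum>u\<in>B. ends_below u x - ends_below u (tail r))"
    unfolding potential_def weight_def by (simp add: sum_subtractf)
  also have "even \<dots>"
    using B_subset not_crosses_outside[OF _ assms(1)] assms
    by (intro dvd_sum even_ends_below_diff_if_not_crosses) (auto simp: is_end_def)
  finally show ?thesis .
qed

lemma even_potential_diff_if_crosses:
  assumes "r \<in> idx n - B" "r' \<in> idx n - B" "r \<noteq> r'" "crosses r r'"
  shows "even (potential r - potential r')"
proof -
  have "potential r - potential r' = (\<Sum>u\<in>B. ends_below u (tail r) - ends_below u (tail r'))"
    unfolding potential_def weight_def by (simp add: sum_subtractf)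
  also have "even \<dots>"
    using B_subset not_crosses_outside[OF _ assms(1)] not_crosses_outside[OF _ assms(2)] assms
    by (intro dvd_sum even_ends_below_diff_if_crosses) auto
  finally show ?thesis .
qed

lemma weight_add1_outside_end:
  assumes "r \<in> idx n - B" "is_end r (z + 1)"
  shows "weight B (z + 1) = weight B z"
proof (rule weight_add1_not_end)
  fix u assume "u \<in> B"
  with assms B_subset end_unique[of u r "z + 1"] show "\<not> is_end u (z + 1)" by auto
qed

lemma weight_1_outside_end: "r \<in> idx n - B \<Longrightarrow> is_end r 1 \<Longrightarrow> weight B 1 = 0"
  using weight_add1_outside_end[of r 0] weight_0[OF B_subset] by simp

lemma even_potential_diff_if_adj:
  assumes "r \<in> idx n - B" "r' \<in> idx n - B" "hook_adj r r' \<or> down_adj r r'"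
  shows "even (potential r - potential r')"
proof -
  obtain x y where xy: "is_end r x" "is_end r' y"
    and adj: "y = x + 1 \<or> x = y + 1 \<or> (x = 2 * int n \<and> y = 1) \<or> (y = 2 * int n \<and> x = 1)"
    using assms(3) unfolding hook_adj_def down_adj_def by (elim disjE exE conjE; metis that)
  from adj have "even (weight B x - weight B y)"
  proof (elim disjE)
    assume "y = x + 1"
    with weight_add1_outside_end[OF assms(2), of x] xy(2) show ?thesis by simp
  next
    assume "x = y + 1"
    with weight_add1_outside_end[OF assms(1), of y] xy(1) show ?thesis by simp
  next
    assume "x = 2 * int n \<and> y = 1"
    with weight_1_outside_end[OF assms(2)] xy(2) even_weight_top[OF B_subset] show ?thesis by simp
  next
    assume "y = 2 * int n \<and> x = 1"
    with weight_1_outside_end[OF assms(1)] xy(1) even_weight_top[OF B_subset] show ?thesis by simp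
  qed
  moreover have "even (weight B x - potential r)" "even (weight B y - potential r')"
    using even_weight_minus_potential[OF assms(1) xy(1)] even_weight_minus_potential[OF assms(2) xy(2)] .
  ultimately show ?thesis by auto
qed

lemma potential_exit_hook:
  assumes "u \<in> B" "r \<in> idx n - B" "hook_adj u r"
  shows "odd (potential r + offset)"
proof -
  obtain x y where xy: "is_end u x" "is_end r y" and adj: "(odd x \<and> y = x + 1) \<or> (odd y \<and> x = y + 1)"
    using assms(3) unfolding hook_adj_def by blast
  have end_u: "even ((x - weight B x) - offset)"
    by (rule even_end_minus_weight[OF assms(1) xy(1)])
  have "odd (weight B y + offset)"
    using adj
  proof
    assume a: "odd x \<and> y = x + 1"
    with weight_add1_outside_end[OF assms(2), of x] xy(2) have "weight B y = weight B x" by simp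
    with a end_u show ?thesis by auto
  next
    assume a: "odd y \<and> x = y + 1"
    with weight_add1_end[OF B_subset assms(1), of y] xy(1) have "weight B x = weight B y + 1" by simp
    with a end_u show ?thesis by auto
  qed
  with even_weight_minus_potential[OF assms(2) xy(2)] show ?thesis by auto
qed

lemma potential_exit_down:
  assumes "u \<in> B" "r \<in> idx n - B" "down_adj u r"
  shows "even (potential r + offset)"
proof -
  obtain x y where xy: "is_end u x" "is_end r y"
    and adj: "(even x \<and> y = x + 1) \<or> (even y \<and> x = y + 1) \<or> (x = 2 * int n \<and> y = 1) \<or> (y = 2 * int n \<and> x = 1)"
    using assms(3) unfolding down_adj_def by blast
  have end_u: "even ((x - weight B x) - offset)"
    by (rule even_end_minus_weight[OF assms(1) xy(1)])
  have "even (weight B y + offset)"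
    using adj
  proof (elim disjE)
    assume a: "even x \<and> y = x + 1"
    with weight_add1_outside_end[OF assms(2), of x] xy(2) have "weight B y = weight B x" by simp
    with a end_u show ?thesis by auto
  next
    assume a: "even y \<and> x = y + 1"
    with weight_add1_end[OF B_subset assms(1), of y] xy(1) have "weight B x = weight B y + 1" by simp
    with a end_u show ?thesis by auto
  next
    assume a: "x = 2 * int n \<and> y = 1"
    with weight_1_outside_end[OF assms(2)] xy(2) have "weight B y = 0" by simp
    with a end_u even_weight_top[OF B_subset] show ?thesis by auto
  next
    assume a: "y = 2 * int n \<and> x = 1"
    with weight_add1_end[OF B_subset assms(1), of 0] weight_0[OF B_subset] xy(1) have "weight B x = 1" by simp
    with a end_u even_weight_top[OF B_subset] show ?thesis by auto
  qed
  with even_weight_minus_potential[OF assms(2) xy(2)] show ?thesis by auto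
qed

lemma reachable_potential_parity:
  assumes G: "G \<subseteq> {(a, b). a \<in> idx n \<and> b \<in> idx n \<and> a \<noteq> b \<and> (crosses a b \<or> adj a b)}"
    and exit: "\<And>u r. u \<in> B \<Longrightarrow> r \<in> idx n - B \<Longrightarrow> adj u r \<Longrightarrow> even (potential r + c)"
    and inner: "\<And>r r'. r \<in> idx n - B \<Longrightarrow> r' \<in> idx n - B \<Longrightarrow> adj r r' \<Longrightarrow> even (potential r - potential r')"
    and "(p, q) \<in> G\<^sup>*"
  shows "q \<in> B \<or> even (potential q + c)"
  using assms(4)
proof (induction rule: rtrancl_induct)
  case base
  then show ?case using p_in_B by simp
next
  case (step v v')
  have v: "v \<in> idx n" "v' \<in> idx n" "v \<noteq> v'" "crosses v v' \<or> adj v v'"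
    using G step(2) by auto
  show ?case
  proof (cases "v' \<in> B")
    case False
    then have v': "v' \<in> idx n - B" using v by simp
    show ?thesis
    proof (cases "v \<in> B")
      case True
      with not_crosses_outside[OF True v'] v exit[OF True v'] show ?thesis by auto
    next
      case False
      with v have vout: "v \<in> idx n - B" by simp
      have "even (potential v' - potential v)"
        using v(4) even_potential_diff_if_crosses[OF v' vout] inner[OF vout v'] v(3)
          crosses_commute[OF v(2,1)] by (auto simp: even_diff_commute)
      with step.IH False show ?thesis by auto
    qed
  qed simp
qed

end

context strands
begin

theorem cross_rtrancl_if_merged_rtrancl:
  assumes p: "p \<in> idx n"
    and H: "Hg \<subseteq> {(a, b). a \<in> idx n \<and> b \<in> idx n \<and> a \<noteq> b \<and> (crosses a b \<or> hook_adj a b)}"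
    and D: "Dg \<subseteq> {(a, b). a \<in> idx n \<and> b \<in> idx n \<and> a \<noteq> b \<and> (crosses a b \<or> down_adj a b)}"
    and "(p, q) \<in> Hg\<^sup>*" "(p, q) \<in> Dg\<^sup>*"
  shows "(p, q) \<in> cross_graph\<^sup>*"
proof -
  define B where "B = {r \<in> idx n. (p, r) \<in> cross_graph\<^sup>*}"
  interpret cross_component n \<sigma> p B
    using p B_def by unfold_locales auto
  have "q \<in> B \<or> even (potential q + (offset - 1))"
    using potential_exit_hook even_potential_diff_if_adj assms(4)
    by (intro reachable_potential_parity[OF H]) auto
  moreover have "q \<in> B \<or> even (potential q + offset)"
    using potential_exit_down even_potential_diff_if_adj assms(5)
    by (intro reachable_potential_parity[OF D]) auto
  ultimately have "q \<in> B" by auto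
  then show ?thesis unfolding B_def by simp
qed

end

section \<open>Bounded affine permutations\<close>

lemma periodic_add_mult:
  assumes per: "\<forall>j. f (j + int n) = f j + int n"
  shows "f (j + m * int n) = f j + m * int n"
proof -
  have nat_mult: "f (j + int k * int n) = f j + int k * int n" for j k
  proof (induction k arbitrary: j)
    case (Suc k)
    have "f (j + int (Suc k) * int n) = f ((j + int k * int n) + int n)"
      by (simp add: algebra_simps)
    also have "\<dots> = f (j + int k * int n) + int n"
      using per by simp
    also have "\<dots> = f j + int (Suc k) * int n"
      using Suc by (simp add: algebra_simps)
    finally show ?case .
  qed simp
  show ?thesis
  proof (cases "m \<ge> 0")
    case True
    then obtain k where "m = int k" by (metis nonneg_int_cases)
    then show ?thesis using nat_mult by simp
  next
    case False
    then obtain k where k: "m = - int k" by (metis le_cases neg_int_cases nonpos_int_cases)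
    have "f j = f ((j + m * int n) + int k * int n)" using k by (simp add: algebra_simps)
    also have "\<dots> = f (j + m * int n) + int k * int n" by (rule nat_mult)
    finally show ?thesis using k by (simp add: algebra_simps)
  qed
qed

lemma fbar_in: "n > 0 \<Longrightarrow> fbar n f s \<in> idx n"
  unfolding fbar_def by (simp add: pos_mod_bound pos_mod_sign add1_zle_eq)

lemma fbar_bij:
  assumes n: "n > 0" and f: "bounded_affine_perm k n f"
  shows "bij_betw (fbar n f) (idx n) (idx n)"
proof -
  have "inj_on (fbar n f) (idx n)"
  proof (rule inj_onI)
    fix s t assume s: "s \<in> idx n" and t: "t \<in> idx n" and eq: "fbar n f s = fbar n f t"
    have bij: "bij f" and per: "\<forall>j. f (j + int n) = f j + int n"
      using f unfolding bounded_affine_perm_def by auto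
    from eq have "int n dvd (f s - 1) - (f t - 1)"
      unfolding fbar_def by (simp add: mod_eq_dvd_iff)
    then obtain m where m: "f s - f t = int n * m" by (auto simp: dvd_def)
    have "f s = f (t + m * int n)"
      using periodic_add_mult[OF per, of t m] m by (simp add: algebra_simps)
    with bij have st: "s = t + m * int n" by (simp add: bij_def inj_eq)
    show "s = t"
    proof (rule ccontr)
      assume "s \<noteq> t"
      with st have "\<bar>m\<bar> * int n \<ge> 1 * int n" by (intro mult_right_mono) auto
      with st have "\<bar>s - t\<bar> \<ge> int n" by (simp add: abs_mult)
      with s t show False by auto
    qed
  qed
  moreover have "fbar n f ` idx n \<subseteq> idx n"
    using fbar_in[OF n] by auto
  ultimately show ?thesis
    using endo_inj_surj[of "idx n" "fbar n f"] by (simp add: bij_betw_def)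
qed

lemma fbar_fdown: "fbar n (fdown f) s = fbar n f (s - 1)"
  unfolding fbar_def fdown_def by simp

lemma fbar_0: "\<forall>j. f (j + int n) = f j + int n \<Longrightarrow> fbar n f 0 = fbar n f (int n)"
  unfolding fbar_def by (metis add_0 mod_add_self2 diff_add_eq)

lemma fbar_preimages_iff:
  assumes "\<And>p. p \<in> idx n \<Longrightarrow> \<tau> p \<in> idx n"
    and "\<And>s p. s \<in> idx n \<Longrightarrow> p \<in> idx n \<Longrightarrow> fbar n g s = p \<longleftrightarrow> s = \<tau> p"
    and "p \<in> idx n" "q \<in> idx n"
  shows "(\<exists>s\<in>idx n. \<exists>t\<in>idx n. fbar n g s = p \<and> fbar n g t = q \<and> M s t) \<longleftrightarrow> M (\<tau> p) (\<tau> q)"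
proof
  assume "\<exists>s\<in>idx n. \<exists>t\<in>idx n. fbar n g s = p \<and> fbar n g t = q \<and> M s t"
  then obtain s t where "s \<in> idx n" "t \<in> idx n" "fbar n g s = p" "fbar n g t = q" "M s t"
    by blast
  with assms(2)[of s p] assms(2)[of t q] assms(3,4) show "M (\<tau> p) (\<tau> q)" by simp
next
  assume "M (\<tau> p) (\<tau> q)"
  moreover have "fbar n g (\<tau> p) = p" "fbar n g (\<tau> q) = q"
    using assms by auto
  ultimately show "\<exists>s\<in>idx n. \<exists>t\<in>idx n. fbar n g s = p \<and> fbar n g t = q \<and> M s t"
    using assms(1,3,4) by blast
qed

lemma crossing_graph_iff_inverse:
  assumes "\<And>p. p \<in> idx n \<Longrightarrow> \<tau> p \<in> idx n"
    and "\<And>s p. s \<in> idx n \<Longrightarrow> p \<in> idx n \<Longrightarrow> fbar n g s = p \<longleftrightarrow> s = \<tau> p"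
  shows "(p, q) \<in> crossing_graph n g \<longleftrightarrow> p \<in> idx n \<and> q \<in> idx n \<and> p \<noteq> q \<and>
     closed_segment (bplus n (\<tau> p)) (bminus n p) \<inter> closed_segment (bplus n (\<tau> q)) (bminus n q) \<noteq> {}"
  unfolding crossing_graph_def
  using fbar_preimages_iff[OF assms, of p q "\<lambda>s t. closed_segment (bplus n s) (bminus n p) \<inter> closed_segment (bplus n t) (bminus n q) \<noteq> {}"]
  by auto

lemma hook_graph_iff_inverse:
  assumes "\<And>p. p \<in> idx n \<Longrightarrow> \<tau> p \<in> idx n"
    and "\<And>s p. s \<in> idx n \<Longrightarrow> p \<in> idx n \<Longrightarrow> fbar n g s = p \<longleftrightarrow> s = \<tau> p"
  shows "(p, q) \<in> hook_graph n g \<longleftrightarrow> p \<in> idx n \<and> q \<in> idx n \<and> p \<noteq> q \<and>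
     closed_segment (bpt n (\<tau> p)) (bpt n p) \<inter> closed_segment (bpt n (\<tau> q)) (bpt n q) \<noteq> {}"
  unfolding hook_graph_def
  using fbar_preimages_iff[OF assms, of p q "\<lambda>s t. closed_segment (bpt n s) (bpt n p) \<inter> closed_segment (bpt n t) (bpt n q) \<noteq> {}"]
  by auto

locale loopless_bounded_affine_perm =
  fixes k :: int and n :: nat and f :: "int \<Rightarrow> int"
  assumes bounded: "bounded_affine_perm k n f" and loopless: "loopless f"
begin

lemma n_pos: "n > 0"
proof (rule ccontr)
  assume "\<not> n > 0"
  with bounded have "f 0 \<le> 0" unfolding bounded_affine_perm_def by (metis add_0 of_nat_0 gr0I)
  with loopless show False unfolding loopless_def by (metis not_le)
qed

lemma periodic: "\<forall>j. f (j + int n) = f j + int n"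
  using bounded by (simp add: bounded_affine_perm_def)

definition fbar_inv :: "int \<Rightarrow> int" where
  "fbar_inv = inv_into (idx n) (fbar n f)"

lemma fbar_inv_bij: "bij_betw fbar_inv (idx n) (idx n)"
  unfolding fbar_inv_def by (rule bij_betw_inv_into[OF fbar_bij[OF n_pos bounded]])

sublocale strands n fbar_inv
  using n_pos fbar_inv_bij by unfold_locales

lemma fbar_eq_iff: "s \<in> idx n \<Longrightarrow> p \<in> idx n \<Longrightarrow> fbar n f s = p \<longleftrightarrow> s = fbar_inv p"
  using fbar_bij[OF n_pos bounded] unfolding fbar_inv_def
  by (auto simp: bij_betw_def f_inv_into_f inv_into_f_f)

lemma fbar_fdown_eq_iff: "s \<in> idx n \<Longrightarrow> p \<in> idx n \<Longrightarrow> fbar n (fdown f) s = p \<longleftrightarrow> s = down_src p"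
  using fbar_eq_iff[of "s - 1" p] fbar_eq_iff[of "int n" p] fbar_0[OF periodic] n_pos sigma_in[of p]
  unfolding fbar_fdown down_src_def by (cases "s = 1") auto

lemma crossing_graph_eq: "crossing_graph n f = cross_graph"
proof (intro set_eqI)
  fix e :: "int \<times> int"
  obtain p q where e: "e = (p, q)" by fastforce
  have "(p, q) \<in> crossing_graph n f \<longleftrightarrow> p \<in> idx n \<and> q \<in> idx n \<and> p \<noteq> q \<and>
     closed_segment (bplus n (fbar_inv p)) (bminus n p) \<inter> closed_segment (bplus n (fbar_inv q)) (bminus n q) \<noteq> {}"
    by (rule crossing_graph_iff_inverse) (simp_all only: sigma_in fbar_eq_iff)
  also have "\<dots> \<longleftrightarrow> (p, q) \<in> cross_graph"
    unfolding cross_graph_def using bplus_bminus_meet_iff_crosses by blast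
  finally show "e \<in> crossing_graph n f \<longleftrightarrow> e \<in> cross_graph" unfolding e .
qed

lemma hook_graph_iff:
  "(p, q) \<in> hook_graph n f \<longleftrightarrow> p \<in> idx n \<and> q \<in> idx n \<and> p \<noteq> q \<and> interleave (fbar_inv p) p (fbar_inv q) q"
proof -
  have "(p, q) \<in> hook_graph n f \<longleftrightarrow> p \<in> idx n \<and> q \<in> idx n \<and> p \<noteq> q \<and>
     closed_segment (bpt n (fbar_inv p)) (bpt n p) \<inter> closed_segment (bpt n (fbar_inv q)) (bpt n q) \<noteq> {}"
    by (rule hook_graph_iff_inverse) (simp_all only: sigma_in fbar_eq_iff)
  then show ?thesis using bpt_meet_iff_interleave by blast
qed

lemma hook_graph_fdown_iff:
  "(p, q) \<in> hook_graph n (fdown f) \<longleftrightarrow>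
     p \<in> idx n \<and> q \<in> idx n \<and> p \<noteq> q \<and> interleave (lift (down_src p)) (lift p) (lift (down_src q)) (lift q)"
proof -
  have "(p, q) \<in> hook_graph n (fdown f) \<longleftrightarrow> p \<in> idx n \<and> q \<in> idx n \<and> p \<noteq> q \<and>
     closed_segment (bpt n (down_src p)) (bpt n p) \<inter> closed_segment (bpt n (down_src q)) (bpt n q) \<noteq> {}"
    by (rule hook_graph_iff_inverse) (simp_all only: down_src_in fbar_fdown_eq_iff)
  then show ?thesis using bpt_down_meet_iff_interleave by blast
qed

lemma cross_graph_subset_hook_graph: "cross_graph \<subseteq> hook_graph n f"
  using crosses_imp_hook_interleave unfolding cross_graph_def by (auto simp: hook_graph_iff)

lemma hook_graph_subset:
  "hook_graph n f \<subseteq> {(a, b). a \<in> idx n \<and> b \<in> idx n \<and> a \<noteq> b \<and> (crosses a b \<or> hook_adj a b)}"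
proof clarify
  fix a b assume "(a, b) \<in> hook_graph n f"
  with hook_interleave_imp_crosses_or_adj[of a b]
  show "a \<in> idx n \<and> b \<in> idx n \<and> a \<noteq> b \<and> (crosses a b \<or> hook_adj a b)"
    by (simp add: hook_graph_iff)
qed

lemma cross_graph_subset_hook_graph_fdown: "cross_graph \<subseteq> hook_graph n (fdown f)"
  using crosses_imp_down_interleave unfolding cross_graph_def by (auto simp: hook_graph_fdown_iff)

lemma hook_graph_fdown_subset:
  "hook_graph n (fdown f) \<subseteq> {(a, b). a \<in> idx n \<and> b \<in> idx n \<and> a \<noteq> b \<and> (crosses a b \<or> down_adj a b)}"
proof clarify
  fix a b assume "(a, b) \<in> hook_graph n (fdown f)"
  with down_interleave_imp_crosses_or_adj[of a b]
  show "a \<in> idx n \<and> b \<in> idx n \<and> a \<noteq> b \<and> (crosses a b \<or> down_adj a b)"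
    by (simp add: hook_graph_fdown_iff)
qed

theorem crossing_rtrancl_iff:
  assumes "p \<in> idx n"
  shows "(p, q) \<in> (crossing_graph n f)\<^sup>* \<longleftrightarrow> (p, q) \<in> (hook_graph n f)\<^sup>* \<and> (p, q) \<in> (hook_graph n (fdown f))\<^sup>*"
  using rtrancl_mono[OF cross_graph_subset_hook_graph] rtrancl_mono[OF cross_graph_subset_hook_graph_fdown]
    cross_rtrancl_if_merged_rtrancl[OF assms hook_graph_subset hook_graph_fdown_subset]
  unfolding crossing_graph_eq by blast

end

theorem mainTheorem13:
  fixes k :: int and n :: nat and f :: "int \<Rightarrow> int"
  assumes "bounded_affine_perm k n f" and "loopless f"
  shows "(graph_connected n (crossing_graph n f) \<longleftrightarrow>
            graph_connected n (hook_graph n f) \<and> graph_connected n (hook_graph n (fdown f)))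
       \<and> (\<forall>p\<in>idx n. \<forall>q\<in>idx n.
            (p, q) \<in> (crossing_graph n f)\<^sup>* \<longleftrightarrow>
            (p, q) \<in> (hook_graph n f)\<^sup>* \<and> (p, q) \<in> (hook_graph n (fdown f))\<^sup>*)"
proof -
  interpret loopless_bounded_affine_perm k n f
    using assms by unfold_locales
  have "\<forall>p\<in>idx n. \<forall>q\<in>idx n.
      (p, q) \<in> (crossing_graph n f)\<^sup>* \<longleftrightarrow> (p, q) \<in> (hook_graph n f)\<^sup>* \<and> (p, q) \<in> (hook_graph n (fdown f))\<^sup>*"
    using crossing_rtrancl_iff by blast
  then show ?thesis
    unfolding graph_connected_def by blast
qed

end
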